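(* Let $\Omega\subset\mathbb{R}^N$ ($N=2$ or $3$) be a bounded connected domain with piecewise smooth boundary $\partial\Omega$ and outward unit normal $\mathbf{n}$, let $\nu>0$ and $\lambda>0$ be constants, and let $\mathbf{f}$, $\mathbf{g}$ be given smooth fields. Suppose $(\mathbf{u},p)$ is a sufficiently smooth (up to the boundary) solution on $\overline{\Omega}\times[0,T]$ of the pressure Poisson equation (PPE) reformulation \begin{align*} \mathbf{u}_t + (\mathbf{u}\cdot\nabla)\mathbf{u} &= \nu\Delta\mathbf{u}-\nabla p + \mathbf{f} && \text{in } \Omega\times(0,T],\\ \mathbf{n}\times\mathbf{u} &= \mathbf{n}\times\mathbf{g},\quad \nabla\cdot\mathbf{u}=0 && \text{on } \partial\Omega\times[0,T],\\ \Delta p &= \nabla\cdot\big(\mathbf{f}-(\mathbf{u}\cdot\nabla)\mathbf{u}\big) && \text{in } \Omega,\\ \frac{\partial p}{\partial \mathbf{n}} &= \mathbf{n}\cdot\big(\mathbf{f}-\mathbf{g}_t-\nu\nabla\times\nabla\times\mathbf{u}-(\mathbf{u}\cdot\nabla)\mathbf{u}\big)+\lambda\,\mathbf{n}\cdot(\mathbf{u}-\mathbf{g}) && \text{on } \partial\Omega. \end{align*} Then the divergence $\phi=\nabla\cdot\mathbf{u}$ satisfies the heat equation $\phi_t=\nu\Delta\phi$ in $\Omega\times(0,T]$ with homogeneous Dirichlet boundary condition $\phi=0$ on $\partial\Omega\times[0,T]$. Consequently, if $\nabla\cdot\mathbf{u}(\cdot,0)=0$ in $\Omega$, then $\nabla\cdot\mathbf{u}=0$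 in $\Omega\times[0,T]$.
   Context: The pressure equations are understood at each time $t\in[0,T]$. $\nabla\times\nabla\times$ denotes the curl of the curl (in 2D with the usual scalar/vector curl conventions). *)

theory Defs
  imports "HOL-Analysis.Analysis" "HOL-Analysis.Cross3"
begin

definition pdir :: "'a::real_normed_vector \<Rightarrow> ('a \<Rightarrow> 'b::real_normed_vector) \<Rightarrow> 'a \<Rightarrow> 'b" where
  "pdir v F z = vector_derivative (\<lambda>s. F (z + s *\<^sub>R v)) (at 0)"

primrec iterD :: "'a::real_normed_vector list \<Rightarrow> ('a \<Rightarrow> 'b::real_normed_vector) \<Rightarrow> 'a \<Rightarrow> 'b" where
  "iterD [] F = F"
| "iterD (v # vs) F = pdir v (iterD vs F)"

definition smooth_on :: "'a::euclidean_space set \<Rightarrow> ('a \<Rightarrow> 'b::real_normed_vector) \<Rightarrow> bool" where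
  "smooth_on S F \<longleftrightarrow> open S \<and>
     (\<forall>ds. set ds \<subseteq> Basis \<longrightarrow>
        continuous_on S (iterD ds F) \<and>
        (\<forall>v\<in>Basis. \<forall>z\<in>S. (\<lambda>s. iterD ds F (z + s *\<^sub>R v)) differentiable (at 0)))"

definition dx :: "'n::finite \<Rightarrow> ((real^'n) \<times> real \<Rightarrow> 'b::real_normed_vector) \<Rightarrow> (real^'n) \<times> real \<Rightarrow> 'b" where
  "dx i F z = pdir (axis i 1, 0) F z"

definition dt :: "((real^'n::finite) \<times> real \<Rightarrow> 'b::real_normed_vector) \<Rightarrow> (real^'n) \<times> real \<Rightarrow> 'b" where
  "dt F z = pdir (0, 1) F z"

definition divergence :: "((real^'n::finite) \<times> real \<Rightarrow> real^'n) \<Rightarrow> (real^'n) \<times> real \<Rightarrow> real" where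
  "divergence u z = (\<Sum>i\<in>UNIV. dx i (\<lambda>w. u w $ i) z)"

definition grad :: "((real^'n::finite) \<times> real \<Rightarrow> real) \<Rightarrow> (real^'n) \<times> real \<Rightarrow> real^'n" where
  "grad p z = (\<chi> i. dx i p z)"

definition laplacian :: "((real^'n::finite) \<times> real \<Rightarrow> 'b::real_normed_vector) \<Rightarrow> (real^'n) \<times> real \<Rightarrow> 'b" where
  "laplacian F z = (\<Sum>i\<in>UNIV. dx i (dx i F) z)"

definition convect :: "((real^'n::finite) \<times> real \<Rightarrow> real^'n) \<Rightarrow> (real^'n) \<times> real \<Rightarrow> real^'n" where
  "convect u z = (\<Sum>j\<in>UNIV. (u z $ j) *\<^sub>R dx j u z)"

definition curl3 :: "((real^3) \<times> real \<Rightarrow> real^3) \<Rightarrow> (real^3) \<times> real \<Rightarrow> real^3" where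
  "curl3 u z = vector
     [dx 2 (\<lambda>w. u w $ 3) z - dx 3 (\<lambda>w. u w $ 2) z,
      dx 3 (\<lambda>w. u w $ 1) z - dx 1 (\<lambda>w. u w $ 3) z,
      dx 1 (\<lambda>w. u w $ 2) z - dx 2 (\<lambda>w. u w $ 1) z]"

definition curlcurl3 :: "((real^3) \<times> real \<Rightarrow> real^3) \<Rightarrow> (real^3) \<times> real \<Rightarrow> real^3" where
  "curlcurl3 u = curl3 (curl3 u)"

definition curl2v :: "((real^2) \<times> real \<Rightarrow> real^2) \<Rightarrow> (real^2) \<times> real \<Rightarrow> real" where
  "curl2v u z = dx 1 (\<lambda>w. u w $ 2) z - dx 2 (\<lambda>w. u w $ 1) z"

definition curl2s :: "((real^2) \<times> real \<Rightarrow> real) \<Rightarrow> (real^2) \<times> real \<Rightarrow> real^2" where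
  "curl2s w z = vector [dx 2 w z, - dx 1 w z]"

definition curlcurl2 :: "((real^2) \<times> real \<Rightarrow> real^2) \<Rightarrow> (real^2) \<times> real \<Rightarrow> real^2" where
  "curlcurl2 u = curl2s (curl2v u)"

definition cross2 :: "real^2 \<Rightarrow> real^2 \<Rightarrow> real" where
  "cross2 a b = a $ 1 * b $ 2 - a $ 2 * b $ 1"

definition outward_normal :: "(real^'n::finite) set \<Rightarrow> real^'n \<Rightarrow> real^'n \<Rightarrow> bool" where
  "outward_normal \<Omega> x m \<longleftrightarrow> x \<in> frontier \<Omega> \<and>
     (\<exists>r>0. \<exists>psi :: real^'n \<Rightarrow> real. \<exists>G.
        smooth_on (ball x r) psi \<and>
        (psi has_derivative (\<lambda>h. G \<bullet> h)) (at x) \<and> G \<noteq> 0 \<and>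
        (\<forall>y\<in>ball x r. y \<in> \<Omega> \<longleftrightarrow> psi y < 0) \<and>
        (\<forall>y\<in>ball x r. y \<in> frontier \<Omega> \<longleftrightarrow> psi y = 0) \<and>
        m = (1 / norm G) *\<^sub>R G)"

definition regular_boundary :: "(real^'n::finite) set \<Rightarrow> (real^'n) set" where
  "regular_boundary \<Omega> = {x \<in> frontier \<Omega>. \<exists>m. outward_normal \<Omega> x m}"

text \<open>Piecewise smooth boundary (weak form): the smooth (regular) boundary points
  are dense in the boundary.\<close>
definition piecewise_smooth_boundary :: "(real^'n::finite) set \<Rightarrow> bool" where
  "piecewise_smooth_boundary \<Omega> \<longleftrightarrow> frontier \<Omega> \<subseteq> closure (regular_boundary \<Omega>)"

definition bounded_domain :: "(real^'n::finite) set \<Rightarrow> bool" where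
  "bounded_domain \<Omega> \<longleftrightarrow> open \<Omega> \<and> connected \<Omega> \<and> \<Omega> \<noteq> {} \<and> bounded \<Omega>"

text \<open>CC is the curl-curl operator, CR the cross product, for the dimension at hand.
  n is the outward unit normal field (meaningful on the regular boundary).\<close>
definition PPE_solution ::
  "(((real^'n::finite) \<times> real \<Rightarrow> real^'n) \<Rightarrow> (real^'n) \<times> real \<Rightarrow> real^'n) \<Rightarrow>
   (real^'n \<Rightarrow> real^'n \<Rightarrow> 'c) \<Rightarrow> (real^'n) set \<Rightarrow> real \<Rightarrow> real \<Rightarrow> real \<Rightarrow>
   ((real^'n) \<times> real \<Rightarrow> real^'n) \<Rightarrow> ((real^'n) \<times> real \<Rightarrow> real^'n) \<Rightarrow>
   (real^'n \<Rightarrow> real^'n) \<Rightarrow> ((real^'n) \<times> real \<Rightarrow> real^'n) \<Rightarrow> ((real^'n) \<times> real \<Rightarrow> real) \<Rightarrow> bool"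
  where
  "PPE_solution CC CR \<Omega> \<nu> lam T f g n u p \<longleftrightarrow>
     \<comment> \<open>momentum equation\<close>
     (\<forall>x\<in>\<Omega>. \<forall>t\<in>{0<..T}.
        dt u (x,t) + convect u (x,t) = \<nu> *\<^sub>R laplacian u (x,t) - grad p (x,t) + f (x,t)) \<and>
     \<comment> \<open>tangential boundary condition\<close>
     (\<forall>x\<in>regular_boundary \<Omega>. \<forall>t\<in>{0..T}. CR (n x) (u (x,t)) = CR (n x) (g (x,t))) \<and>
     \<comment> \<open>divergence boundary condition\<close>
     (\<forall>x\<in>frontier \<Omega>. \<forall>t\<in>{0..T}. divergence u (x,t) = 0) \<and>
     \<comment> \<open>pressure Poisson equation\<close>
     (\<forall>x\<in>\<Omega>. \<forall>t\<in>{0..T}.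
        laplacian p (x,t) = divergence (\<lambda>z. f z - convect u z) (x,t)) \<and>
     \<comment> \<open>pressure Neumann condition\<close>
     (\<forall>x\<in>regular_boundary \<Omega>. \<forall>t\<in>{0..T}.
        n x \<bullet> grad p (x,t) =
          n x \<bullet> (f (x,t) - dt g (x,t) - \<nu> *\<^sub>R CC u (x,t) - convect u (x,t))
          + lam * (n x \<bullet> (u (x,t) - g (x,t))))"

definition smooth_up_to_boundary :: "(real^'n::finite) set \<Rightarrow> real \<Rightarrow> ((real^'n) \<times> real \<Rightarrow> 'b::real_normed_vector) \<Rightarrow> bool" where
  "smooth_up_to_boundary \<Omega> T F \<longleftrightarrow> (\<exists>U. closure \<Omega> \<times> {0..T} \<subseteq> U \<and> smooth_on U F)"

definition PPE_setting where
  "PPE_setting CC CR \<Omega> \<nu> lam T f g n u p \<longleftrightarrow>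
     bounded_domain \<Omega> \<and> piecewise_smooth_boundary \<Omega> \<and>
     (\<forall>x\<in>regular_boundary \<Omega>. outward_normal \<Omega> x (n x)) \<and>
     \<nu> > 0 \<and> lam > 0 \<and>
     smooth_up_to_boundary \<Omega> T f \<and> smooth_up_to_boundary \<Omega> T g \<and>
     smooth_up_to_boundary \<Omega> T u \<and> smooth_up_to_boundary \<Omega> T p \<and>
     PPE_solution CC CR \<Omega> \<nu> lam T f g n u p"

definition divergence_conclusion where
  "divergence_conclusion \<Omega> \<nu> T u \<longleftrightarrow>
     (\<forall>x\<in>\<Omega>. \<forall>t\<in>{0<..T}.
        dt (divergence u) (x,t) = \<nu> * laplacian (divergence u) (x,t)) \<and>
     (\<forall>x\<in>frontier \<Omega>. \<forall>t\<in>{0..T}. divergence u (x,t) = 0) \<and>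
     ((\<forall>x\<in>\<Omega>. divergence u (x,0) = 0) \<longrightarrow>
        (\<forall>x\<in>\<Omega>. \<forall>t\<in>{0..T}. divergence u (x,t) = 0))"

end

theory Submission
  imports Defs
begin

text \<open>Taking the divergence of the momentum equation and subtracting the pressure Poisson
  equation leaves \<open>\<nabla>\<cdot>u\<^sub>t = \<nu> \<nabla>\<cdot>\<Delta>u\<close> in \<open>\<Omega>\<close>; since the partial derivatives of a smooth field commute,
  this is the heat equation \<open>\<phi>\<^sub>t = \<nu> \<Delta>\<phi>\<close> for \<open>\<phi> = \<nabla>\<cdot>u\<close>. The Dirichlet condition \<open>\<phi> = 0\<close> is one of
  the boundary conditions of the reformulation. The weak maximum principle for the heat
  equation, applied to \<open>\<phi>\<close> and \<open>-\<phi>\<close>, then shows that \<open>\<phi>\<close> stays zero if it is zero initially.\<close>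

section \<open>Directional derivatives\<close>

lemma pdir_eqI:
  assumes "((\<lambda>s. F (z + s *\<^sub>R v)) has_vector_derivative D) (at 0)"
  shows "pdir v F z = D"
  using assms by (simp add: pdir_def vector_derivative_at)

lemma pdir_has_vector_derivative:
  assumes "(\<lambda>s. F (z + s *\<^sub>R v)) differentiable (at 0)"
  shows "((\<lambda>s. F (z + s *\<^sub>R v)) has_vector_derivative pdir v F z) (at 0)"
  using assms by (simp add: pdir_def vector_derivative_works)

lemma pdir_sum_linear:
  assumes "\<And>k. k \<in> I \<Longrightarrow> bounded_linear (L k)"
    and "\<And>k. k \<in> I \<Longrightarrow> (\<lambda>s. F k (z + s *\<^sub>R v)) differentiable (at 0)"
  shows "pdir v (\<lambda>w. \<Sum>k\<in>I. L k (F k w)) z = (\<Sum>k\<in>I. L k (pdir v (F k) z))"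
proof (rule pdir_eqI, rule has_vector_derivative_sum)
  fix k assume "k \<in> I"
  then show "((\<lambda>s. L k (F k (z + s *\<^sub>R v))) has_vector_derivative L k (pdir v (F k) z)) (at 0)"
    using bounded_linear.has_vector_derivative[OF assms(1) pdir_has_vector_derivative[OF assms(2)]]
    by blast
qed

lemma pdir_add:
  assumes "(\<lambda>s. F (z + s *\<^sub>R v)) differentiable (at 0)"
    and "(\<lambda>s. G (z + s *\<^sub>R v)) differentiable (at 0)"
  shows "pdir v (\<lambda>w. F w + G w) z = pdir v F z + pdir v G z"
  by (rule pdir_eqI, rule has_vector_derivative_add)
    (use assms in \<open>simp_all add: pdir_has_vector_derivative\<close>)

lemma open_contains_line:
  fixes z :: "'a::real_normed_vector"
  assumes "open U" "z \<in> U"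
  obtains e where "e > 0" "\<And>s. \<bar>s\<bar> < e \<Longrightarrow> z + s *\<^sub>R v \<in> U"
proof -
  obtain r where r: "r > 0" "ball z r \<subseteq> U"
    using assms open_contains_ball by blast
  define e where "e = r / (norm v + 1)"
  have np: "norm v + 1 > 0"
    by (simp add: add_nonneg_pos)
  have "z + s *\<^sub>R v \<in> U" if "\<bar>s\<bar> < e" for s
  proof -
    have "norm (s *\<^sub>R v) \<le> \<bar>s\<bar> * (norm v + 1)"
      by (simp add: mult_left_mono)
    also have "\<dots> < e * (norm v + 1)"
      using that np by (simp add: mult_strict_right_mono)
    also have "\<dots> = r"
      using np by (simp add: e_def)
    finally show ?thesis
      using r by (auto simp: dist_norm)
  qed
  moreover have "e > 0"
    using r np by (simp add: e_def)
  ultimately show ?thesis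
    using that by blast
qed

lemma pdir_cong_line:
  assumes "e > 0" "\<And>s. \<bar>s\<bar> < e \<Longrightarrow> F (z + s *\<^sub>R v) = G (z + s *\<^sub>R v)"
  shows "pdir v F z = pdir v G z"
proof -
  have "((\<lambda>s. F (z + s *\<^sub>R v)) has_vector_derivative D) (at 0) \<longleftrightarrow>
        ((\<lambda>s. G (z + s *\<^sub>R v)) has_vector_derivative D) (at 0)" for D
  proof
    assume "((\<lambda>s. F (z + s *\<^sub>R v)) has_vector_derivative D) (at 0)"
    then show "((\<lambda>s. G (z + s *\<^sub>R v)) has_vector_derivative D) (at 0)"
      by (rule has_vector_derivative_transform_within[where S=UNIV, OF _ assms(1)]) (use assms(2) in auto)
  next
    assume "((\<lambda>s. G (z + s *\<^sub>R v)) has_vector_derivative D) (at 0)"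
    then show "((\<lambda>s. F (z + s *\<^sub>R v)) has_vector_derivative D) (at 0)"
      by (rule has_vector_derivative_transform_within[where S=UNIV, OF _ assms(1)]) (use assms(2) in auto)
  qed
  then show ?thesis
    by (simp add: pdir_def vector_derivative_def)
qed

lemma pdir_cong:
  assumes "open U" "z \<in> U" "\<And>w. w \<in> U \<Longrightarrow> F w = G w"
  shows "pdir v F z = pdir v G z"
proof -
  obtain e where "e > 0" "\<And>s. \<bar>s\<bar> < e \<Longrightarrow> z + s *\<^sub>R v \<in> U"
    using open_contains_line assms by metis
  then show ?thesis using assms(3) by (intro pdir_cong_line[of e]) auto
qed

lemma smooth_on_open: "smooth_on U F \<Longrightarrow> open U"
  by (simp add: smooth_on_def)

lemma smooth_on_continuous_on:
  "smooth_on U F \<Longrightarrow> set ds \<subseteq> Basis \<Longrightarrow> continuous_on U (iterD ds F)"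
  by (simp add: smooth_on_def)

lemma smooth_on_line_differentiable:
  assumes "smooth_on U F" "v \<in> Basis" "z \<in> U"
  shows "(\<lambda>s. F (z + s *\<^sub>R v)) differentiable (at 0)"
  using assms unfolding smooth_on_def by (metis empty_subsetI iterD.simps(1) list.set(1))

lemma smooth_on_subset:
  "smooth_on U F \<Longrightarrow> open V \<Longrightarrow> V \<subseteq> U \<Longrightarrow> smooth_on V F"
  unfolding smooth_on_def by (meson continuous_on_subset subsetD)

lemma iterD_append: "iterD (ds @ [v]) F = iterD ds (pdir v F)"
  by (induction ds) auto

lemma smooth_on_pdir:
  assumes "smooth_on U F" "v \<in> Basis"
  shows "smooth_on U (pdir v F)"
proof -
  have "set ds \<subseteq> Basis \<Longrightarrow> set (ds @ [v]) \<subseteq> Basis" for ds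
    using assms(2) by auto
  then show ?thesis
    using assms(1) unfolding smooth_on_def iterD_append[symmetric] by blast
qed

lemma has_vector_derivative_pdir:
  assumes "smooth_on U F" "v \<in> Basis" "z + s0 *\<^sub>R v \<in> U"
  shows "((\<lambda>s. F (z + s *\<^sub>R v)) has_vector_derivative pdir v F (z + s0 *\<^sub>R v)) (at s0)"
proof -
  have "((\<lambda>s. s - s0) has_vector_derivative 1) (at s0)"
    using has_vector_derivative_diff[OF has_vector_derivative_id has_vector_derivative_const] by simp
  moreover have "((\<lambda>s. F ((z + s0 *\<^sub>R v) + s *\<^sub>R v)) has_vector_derivative
      pdir v F (z + s0 *\<^sub>R v)) (at ((\<lambda>s. s - s0) s0))"
    using assms by (simp only: diff_self) (intro pdir_has_vector_derivative smooth_on_line_differentiable)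
  ultimately have "((\<lambda>s. F ((z + s0 *\<^sub>R v) + (s - s0) *\<^sub>R v)) has_vector_derivative
      pdir v F (z + s0 *\<^sub>R v)) (at s0)"
    using vector_diff_chain_at by (fastforce simp: o_def)
  then show ?thesis
    by (simp add: algebra_simps)
qed

lemma has_real_derivative_pdir:
  fixes F :: "'a::euclidean_space \<Rightarrow> real"
  assumes "smooth_on U F" "v \<in> Basis" "z + s0 *\<^sub>R v \<in> U"
  shows "((\<lambda>s. F (z + s *\<^sub>R v)) has_real_derivative pdir v F (z + s0 *\<^sub>R v)) (at s0)"
  using has_vector_derivative_pdir[OF assms]
  by (simp add: has_real_derivative_iff_has_vector_derivative)

lemma iterD_sum_linear:
  assumes U: "open U" and L: "\<And>k. k \<in> I \<Longrightarrow> bounded_linear (L k)"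
    and F: "\<And>k. k \<in> I \<Longrightarrow> smooth_on U (F k)"
    and "set ds \<subseteq> Basis" "w \<in> U"
  shows "iterD ds (\<lambda>w. \<Sum>k\<in>I. L k (F k w)) w = (\<Sum>k\<in>I. L k (iterD ds (F k) w))"
  using assms(4,5)
proof (induction ds arbitrary: w)
  case Nil
  then show ?case by simp
next
  case (Cons v ds)
  have "pdir v (iterD ds (\<lambda>w. \<Sum>k\<in>I. L k (F k w))) w =
      pdir v (\<lambda>w. \<Sum>k\<in>I. L k (iterD ds (F k) w)) w"
    using Cons by (intro pdir_cong[OF U]) auto
  also have "\<dots> = (\<Sum>k\<in>I. L k (pdir v (iterD ds (F k)) w))"
  proof (rule pdir_sum_linear[OF L])
    fix k assume "k \<in> I"
    then show "(\<lambda>s. iterD ds (F k) (w + s *\<^sub>R v)) differentiable (at 0)"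
      using F Cons.prems unfolding smooth_on_def by auto
  qed
  finally show ?case by simp
qed

lemma smooth_on_sum_linear:
  fixes F :: "'k \<Rightarrow> 'a::euclidean_space \<Rightarrow> 'b::real_normed_vector"
    and L :: "'k \<Rightarrow> 'b \<Rightarrow> 'c::real_normed_vector"
  assumes U: "open U" and L: "\<And>k. k \<in> I \<Longrightarrow> bounded_linear (L k)"
    and F: "\<And>k. k \<in> I \<Longrightarrow> smooth_on U (F k)"
  shows "smooth_on U (\<lambda>w. \<Sum>k\<in>I. L k (F k w))"
  unfolding smooth_on_def
proof (intro conjI allI impI ballI)
  fix ds :: "'a list" assume ds: "set ds \<subseteq> Basis"
  have eq: "iterD ds (\<lambda>w. \<Sum>k\<in>I. L k (F k w)) w = (\<Sum>k\<in>I. L k (iterD ds (F k) w))"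
    if "w \<in> U" for w
    using U L F ds that by (rule iterD_sum_linear)
  have "continuous_on U (\<lambda>w. \<Sum>k\<in>I. L k (iterD ds (F k) w))"
  proof (rule continuous_on_sum)
    fix k assume "k \<in> I"
    then show "continuous_on U (\<lambda>w. L k (iterD ds (F k) w))"
      using bounded_linear.continuous_on[OF L smooth_on_continuous_on[OF F ds]] by blast
  qed
  then show "continuous_on U (iterD ds (\<lambda>w. \<Sum>k\<in>I. L k (F k w)))"
    by (rule continuous_on_eq) (simp add: eq)
  fix v z :: 'a assume v: "v \<in> Basis" and z: "z \<in> U"
  obtain e where e: "e > 0" "\<And>s. \<bar>s\<bar> < e \<Longrightarrow> z + s *\<^sub>R v \<in> U"
    using open_contains_line[OF U z] by metis
  have "((\<lambda>s. \<Sum>k\<in>I. L k (iterD ds (F k) (z + s *\<^sub>R v))) has_vector_derivative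
      (\<Sum>k\<in>I. L k (pdir v (iterD ds (F k)) z))) (at 0)"
  proof (rule has_vector_derivative_sum)
    fix k assume k: "k \<in> I"
    have "(\<lambda>s. iterD ds (F k) (z + s *\<^sub>R v)) differentiable (at 0)"
      using F[OF k] ds v z unfolding smooth_on_def by blast
    then show "((\<lambda>s. L k (iterD ds (F k) (z + s *\<^sub>R v))) has_vector_derivative
        L k (pdir v (iterD ds (F k)) z)) (at 0)"
      by (rule bounded_linear.has_vector_derivative[OF L[OF k] pdir_has_vector_derivative])
  qed
  then have "(\<lambda>s. \<Sum>k\<in>I. L k (iterD ds (F k) (z + s *\<^sub>R v))) differentiable (at 0)"
    by (rule differentiableI_vector)
  then show "(\<lambda>s. iterD ds (\<lambda>w. \<Sum>k\<in>I. L k (F k w)) (z + s *\<^sub>R v)) differentiable (at 0)"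
  proof (rule differentiable_transform_within[OF _ e(1)])
    fix s :: real assume "dist s 0 < e"
    then show "(\<Sum>k\<in>I. L k (iterD ds (F k) (z + s *\<^sub>R v))) =
        iterD ds (\<lambda>w. \<Sum>k\<in>I. L k (F k w)) (z + s *\<^sub>R v)"
      using eq e(2) by (simp add: dist_real_def)
  qed simp
qed (fact U)

lemma iterD_linear:
  assumes "bounded_linear L" "smooth_on U F" "set ds \<subseteq> Basis" "w \<in> U"
  shows "iterD ds (\<lambda>w. L (F w)) w = L (iterD ds F w)"
  using iterD_sum_linear[of U "{()}" "\<lambda>_. L" "\<lambda>_. F" ds w] assms
  by (simp add: smooth_on_open)

lemma smooth_on_linear:
  "bounded_linear L \<Longrightarrow> smooth_on U F \<Longrightarrow> smooth_on U (\<lambda>w. L (F w))"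
  using smooth_on_sum_linear[of U "{()}" "\<lambda>_. L" "\<lambda>_. F"] by (simp add: smooth_on_open)

lemma smooth_on_sum:
  "open U \<Longrightarrow> (\<And>k. k \<in> I \<Longrightarrow> smooth_on U (F k)) \<Longrightarrow> smooth_on U (\<lambda>w. \<Sum>k\<in>I. F k w)"
  using smooth_on_sum_linear[of U I "\<lambda>_ y. y" F] by simp

lemma smooth_on_add:
  assumes "smooth_on U F" "smooth_on U G"
  shows "smooth_on U (\<lambda>w. F w + G w)"
  using smooth_on_sum[of U UNIV "\<lambda>k. if k then G else F"] assms
  by (simp add: smooth_on_open UNIV_bool)

lemma smooth_on_component: "smooth_on U u \<Longrightarrow> smooth_on U (\<lambda>w. u w $ k)"
  by (rule smooth_on_linear[OF bounded_linear_vec_nth])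

section \<open>Symmetry of second derivatives\<close>

lemma second_difference_mean_value:
  fixes F :: "'a::euclidean_space \<Rightarrow> real"
  assumes F: "smooth_on U F" and ab: "a \<in> Basis" "b \<in> Basis" and h: "h > 0"
    and in_U: "\<And>s t. 0 \<le> s \<Longrightarrow> s \<le> h \<Longrightarrow> 0 \<le> t \<Longrightarrow> t \<le> h \<Longrightarrow> z + s *\<^sub>R a + t *\<^sub>R b \<in> U"
  obtains \<xi> \<eta> where "0 < \<xi>" "\<xi> < h" "0 < \<eta>" "\<eta> < h"
    "F (z + h *\<^sub>R a + h *\<^sub>R b) - F (z + h *\<^sub>R a) - F (z + h *\<^sub>R b) + F z
       = h * h * pdir b (pdir a F) (z + \<xi> *\<^sub>R a + \<eta> *\<^sub>R b)"
proof -
  define g where "g s = F ((z + h *\<^sub>R b) + s *\<^sub>R a) - F (z + s *\<^sub>R a)" for s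
  have g': "(g has_real_derivative pdir a F ((z + h *\<^sub>R b) + s *\<^sub>R a) - pdir a F (z + s *\<^sub>R a)) (at s)"
    if "0 \<le> s" "s \<le> h" for s
  proof -
    have "(z + h *\<^sub>R b) + s *\<^sub>R a \<in> U" "z + s *\<^sub>R a \<in> U"
      using in_U[of s h] in_U[of s 0] that h by (simp_all add: algebra_simps)
    then show ?thesis
      unfolding g_def by (intro DERIV_diff has_real_derivative_pdir[OF F ab(1)])
  qed
  obtain \<xi> where \<xi>: "0 < \<xi>" "\<xi> < h"
    "g h - g 0 = (h - 0) * (pdir a F ((z + h *\<^sub>R b) + \<xi> *\<^sub>R a) - pdir a F (z + \<xi> *\<^sub>R a))"
    using MVT2[OF h g'] by blast
  define k where "k t = pdir a F ((z + \<xi> *\<^sub>R a) + t *\<^sub>R b)" for t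
  have k': "(k has_real_derivative pdir b (pdir a F) ((z + \<xi> *\<^sub>R a) + t *\<^sub>R b)) (at t)"
    if "0 \<le> t" "t \<le> h" for t
    unfolding k_def using in_U[of \<xi> t] that \<xi>
    by (intro has_real_derivative_pdir[OF smooth_on_pdir[OF F ab(1)] ab(2)]) simp
  obtain \<eta> where \<eta>: "0 < \<eta>" "\<eta> < h"
    "k h - k 0 = (h - 0) * pdir b (pdir a F) ((z + \<xi> *\<^sub>R a) + \<eta> *\<^sub>R b)"
    using MVT2[OF h k'] by blast
  have "F (z + h *\<^sub>R a + h *\<^sub>R b) - F (z + h *\<^sub>R a) - F (z + h *\<^sub>R b) + F z = g h - g 0"
    by (simp add: g_def algebra_simps)
  also have "\<dots> = h * (k h - k 0)"
    using \<xi>(3) by (simp add: k_def algebra_simps)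
  also have "\<dots> = h * h * pdir b (pdir a F) (z + \<xi> *\<^sub>R a + \<eta> *\<^sub>R b)"
    using \<eta>(3) by simp
  finally show ?thesis
    using that \<xi> \<eta> by blast
qed

lemma mixed_pdirs_agree_nearby:
  fixes F :: "'a::euclidean_space \<Rightarrow> real"
  assumes F: "smooth_on U F" and ab: "a \<in> Basis" "b \<in> Basis" and z: "z \<in> U" and "d > 0"
  obtains p q where "dist p z < d" "dist q z < d" "pdir b (pdir a F) p = pdir a (pdir b F) q"
proof -
  \<comment> \<open>Both mixed derivatives express the same second difference via the mean value theorem.\<close>
  obtain r where r: "r > 0" "ball z r \<subseteq> U"
    using smooth_on_open[OF F] z open_contains_ball by blast
  define h where "h = min r d / 3"
  have h: "h > 0"
    using r \<open>d > 0\<close> by (simp add: h_def)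
  have near: "dist (z + s *\<^sub>R c + t *\<^sub>R e) z < min r d"
    if "0 \<le> s" "s \<le> h" "0 \<le> t" "t \<le> h" "c \<in> Basis" "e \<in> Basis" for s t c e
  proof -
    have "dist (z + s *\<^sub>R c + t *\<^sub>R e) z = norm (s *\<^sub>R c + t *\<^sub>R e)"
      by (simp add: dist_norm)
    also have "\<dots> \<le> norm (s *\<^sub>R c) + norm (t *\<^sub>R e)"
      by (rule norm_triangle_ineq)
    also have "\<dots> = s + t"
      using that by (simp add: norm_Basis)
    finally show ?thesis
      using that h unfolding h_def by linarith
  qed
  have in_U: "z + s *\<^sub>R c + t *\<^sub>R e \<in> U"
    if "0 \<le> s" "s \<le> h" "0 \<le> t" "t \<le> h" "c \<in> Basis" "e \<in> Basis" for s t c e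
    using near[OF that] r by (auto simp: dist_commute)
  obtain \<xi> \<eta> where p: "0 < \<xi>" "\<xi> < h" "0 < \<eta>" "\<eta> < h"
    "F (z + h *\<^sub>R a + h *\<^sub>R b) - F (z + h *\<^sub>R a) - F (z + h *\<^sub>R b) + F z
       = h * h * pdir b (pdir a F) (z + \<xi> *\<^sub>R a + \<eta> *\<^sub>R b)"
    using second_difference_mean_value[OF F ab h] in_U ab by blast
  obtain \<xi>' \<eta>' where q: "0 < \<xi>'" "\<xi>' < h" "0 < \<eta>'" "\<eta>' < h"
    "F (z + h *\<^sub>R b + h *\<^sub>R a) - F (z + h *\<^sub>R b) - F (z + h *\<^sub>R a) + F z
       = h * h * pdir a (pdir b F) (z + \<xi>' *\<^sub>R b + \<eta>' *\<^sub>R a)"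
    using second_difference_mean_value[OF F ab(2,1) h] in_U ab by blast
  have swap: "z + h *\<^sub>R b + h *\<^sub>R a = z + h *\<^sub>R a + h *\<^sub>R b"
    by (simp add: algebra_simps)
  have "h * h * pdir b (pdir a F) (z + \<xi> *\<^sub>R a + \<eta> *\<^sub>R b) =
      h * h * pdir a (pdir b F) (z + \<xi>' *\<^sub>R b + \<eta>' *\<^sub>R a)"
    using p(5) q(5) unfolding swap by linarith
  then have "pdir b (pdir a F) (z + \<xi> *\<^sub>R a + \<eta> *\<^sub>R b) =
      pdir a (pdir b F) (z + \<xi>' *\<^sub>R b + \<eta>' *\<^sub>R a)"
    using h by simp
  moreover have "dist (z + \<xi> *\<^sub>R a + \<eta> *\<^sub>R b) z < d" "dist (z + \<xi>' *\<^sub>R b + \<eta>' *\<^sub>R a) z < d"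
    using near[of \<xi> \<eta> a b] near[of \<xi>' \<eta>' b a] p(1-4) q(1-4) ab by simp_all
  ultimately show ?thesis
    using that by blast
qed

lemma pdir_commute:
  fixes F :: "'a::euclidean_space \<Rightarrow> real"
  assumes F: "smooth_on U F" and ab: "a \<in> Basis" "b \<in> Basis" and z: "z \<in> U"
  shows "pdir b (pdir a F) z = pdir a (pdir b F) z"
proof (rule ccontr)
  let ?D1 = "pdir b (pdir a F)" and ?D2 = "pdir a (pdir b F)"
  assume "?D1 z \<noteq> ?D2 z"
  then have e: "\<bar>?D1 z - ?D2 z\<bar> / 2 > 0"
    by simp
  have "isCont ?D1 z" "isCont ?D2 z"
    using smooth_on_continuous_on[OF F, of "[b, a]"] smooth_on_continuous_on[OF F, of "[a, b]"] ab z
      smooth_on_open[OF F] by (auto simp: continuous_on_eq_continuous_at)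
  then obtain d1 d2 where d1: "d1 > 0" "\<And>p. dist p z < d1 \<Longrightarrow> dist (?D1 p) (?D1 z) < \<bar>?D1 z - ?D2 z\<bar> / 2"
    and d2: "d2 > 0" "\<And>q. dist q z < d2 \<Longrightarrow> dist (?D2 q) (?D2 z) < \<bar>?D1 z - ?D2 z\<bar> / 2"
    using e continuous_at_eps_delta by metis
  obtain p q where "dist p z < min d1 d2" "dist q z < min d1 d2" "?D1 p = ?D2 q"
    using mixed_pdirs_agree_nearby[OF F ab z, of "min d1 d2"] d1 d2 by auto
  then show False
    using d1(2)[of p] d2(2)[of q] by (simp add: dist_real_def) (smt (verit))
qed

section \<open>Space-time derivatives and the divergence\<close>

lemma pdir_linear:
  assumes "bounded_linear L" "smooth_on U F" "v \<in> Basis" "z \<in> U"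
  shows "pdir v (\<lambda>w. L (F w)) z = L (pdir v F z)"
  using iterD_linear[OF assms(1,2), of "[v]" z] assms(3,4) by simp

lemma pdir_sum:
  assumes "\<And>k. k \<in> I \<Longrightarrow> smooth_on U (F k)" "v \<in> Basis" "z \<in> U"
  shows "pdir v (\<lambda>w. \<Sum>k\<in>I. F k w) z = (\<Sum>k\<in>I. pdir v (F k) z)"
proof -
  have "pdir v (\<lambda>w. \<Sum>k\<in>I. (\<lambda>y. y) (F k w)) z = (\<Sum>k\<in>I. (\<lambda>y. y) (pdir v (F k) z))"
    using assms by (intro pdir_sum_linear bounded_linear_ident smooth_on_line_differentiable)
  then show ?thesis
    by simp
qed

lemma axis_zero_in_Basis: "(axis i 1, 0) \<in> (Basis :: ((real^'n) \<times> real) set)"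
  by (auto simp: Basis_prod_def Basis_vec_def)

lemma zero_one_in_Basis: "(0, 1) \<in> (Basis :: ((real^'n) \<times> real) set)"
  by (simp add: Basis_prod_def)

lemma dx_pdir: "dx i F = pdir (axis i 1, 0) F"
  by (simp add: dx_def fun_eq_iff)

lemma dt_pdir: "dt F = pdir (0, 1) F"
  by (simp add: dt_def fun_eq_iff)

lemma smooth_on_dx: "smooth_on U F \<Longrightarrow> smooth_on U (dx i F)"
  by (simp add: dx_pdir smooth_on_pdir axis_zero_in_Basis)

lemma smooth_on_dt: "smooth_on U F \<Longrightarrow> smooth_on U (dt F)"
  by (simp add: dt_pdir smooth_on_pdir zero_one_in_Basis)

lemma dx_commute:
  fixes F :: "(real^'n) \<times> real \<Rightarrow> real"
  shows "smooth_on U F \<Longrightarrow> z \<in> U \<Longrightarrow> dx i (dx j F) z = dx j (dx i F) z"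
  by (simp add: dx_pdir pdir_commute axis_zero_in_Basis)

lemma dt_dx_commute:
  fixes F :: "(real^'n) \<times> real \<Rightarrow> real"
  shows "smooth_on U F \<Longrightarrow> z \<in> U \<Longrightarrow> dt (dx i F) z = dx i (dt F) z"
  by (simp add: dx_pdir dt_pdir pdir_commute axis_zero_in_Basis zero_one_in_Basis)

lemma dx_cong:
  "open U \<Longrightarrow> z \<in> U \<Longrightarrow> (\<And>w. w \<in> U \<Longrightarrow> F w = G w) \<Longrightarrow> dx i F z = dx i G z"
  unfolding dx_def by (rule pdir_cong)

lemma dx_sum:
  "(\<And>k. k \<in> I \<Longrightarrow> smooth_on U (F k)) \<Longrightarrow> z \<in> U \<Longrightarrow>
    dx i (\<lambda>w. \<Sum>k\<in>I. F k w) z = (\<Sum>k\<in>I. dx i (F k) z)"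
  unfolding dx_def by (rule pdir_sum) (auto simp: axis_zero_in_Basis)

lemma dt_sum:
  "(\<And>k. k \<in> I \<Longrightarrow> smooth_on U (F k)) \<Longrightarrow> z \<in> U \<Longrightarrow>
    dt (\<lambda>w. \<Sum>k\<in>I. F k w) z = (\<Sum>k\<in>I. dt (F k) z)"
  unfolding dt_def by (rule pdir_sum) (auto simp: zero_one_in_Basis)

lemma dt_component: "smooth_on U u \<Longrightarrow> z \<in> U \<Longrightarrow> dt (\<lambda>w. u w $ k) z = dt u z $ k"
  unfolding dt_def by (rule pdir_linear[OF bounded_linear_vec_nth]) (auto simp: zero_one_in_Basis)

lemma laplacian_component:
  assumes "smooth_on U u" "z \<in> U"
  shows "laplacian (\<lambda>w. u w $ k) z = laplacian u z $ k"
proof -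
  have "dx i (dx i (\<lambda>w. u w $ k)) z = dx i (dx i u) z $ k" for i
    using iterD_linear[OF bounded_linear_vec_nth assms(1), of "[(axis i 1, 0), (axis i 1, 0)]" z k] assms(2)
    by (simp add: dx_pdir axis_zero_in_Basis)
  then show ?thesis
    by (simp add: laplacian_def sum_component)
qed

lemma has_real_derivative_dx:
  fixes F :: "(real^'n) \<times> real \<Rightarrow> real"
  assumes "smooth_on U F" "(x + s0 *\<^sub>R axis i 1, t) \<in> U"
  shows "((\<lambda>s. F (x + s *\<^sub>R axis i 1, t)) has_real_derivative dx i F (x + s0 *\<^sub>R axis i 1, t)) (at s0)"
  using has_real_derivative_pdir[OF assms(1) axis_zero_in_Basis, of "(x, t)" s0 i] assms(2)
  by (simp add: dx_def)

lemma has_real_derivative_dt: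
  fixes F :: "(real^'n) \<times> real \<Rightarrow> real"
  assumes "smooth_on U F" "(x, t) \<in> U"
  shows "((\<lambda>s. F (x, t + s)) has_real_derivative dt F (x, t)) (at 0)"
  using has_real_derivative_pdir[OF assms(1) zero_one_in_Basis, of "(x, t)" 0] assms(2)
  by (simp add: dt_def)

lemma divergence_components: "divergence u = (\<lambda>w. \<Sum>i\<in>UNIV. dx i (\<lambda>w. u w $ i) w)"
  by (simp add: divergence_def fun_eq_iff)

lemma smooth_on_divergence: "smooth_on U u \<Longrightarrow> smooth_on U (divergence u)"
  unfolding divergence_components
  by (intro smooth_on_sum smooth_on_dx smooth_on_component) (auto simp: smooth_on_open)

lemma smooth_on_laplacian: "smooth_on U F \<Longrightarrow> smooth_on U (laplacian F)"
  unfolding laplacian_def[abs_def]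
  by (intro smooth_on_sum smooth_on_dx) (auto simp: smooth_on_open)

lemma smooth_on_grad:
  assumes "smooth_on U p"
  shows "smooth_on U (grad p)"
proof -
  have "grad p w = (\<Sum>i\<in>UNIV. dx i p w *\<^sub>R axis i 1)" for w
    using basis_expansion[of "grad p w"] by (simp add: grad_def scalar_mult_eq_scaleR)
  then have "grad p = (\<lambda>w. \<Sum>i\<in>UNIV. (\<lambda>r. r *\<^sub>R axis i 1) (dx i p w))"
    by auto
  moreover have "smooth_on U (\<lambda>w. \<Sum>i\<in>UNIV. (\<lambda>r. r *\<^sub>R axis i 1) (dx i p w))"
    using assms by (intro smooth_on_sum_linear bounded_linear_scaleR_left smooth_on_dx smooth_on_open)
  ultimately show ?thesis
    by simp
qed

lemma divergence_grad: "divergence (grad p) = laplacian p"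
  by (simp add: divergence_def grad_def laplacian_def fun_eq_iff)

lemma divergence_cong:
  assumes "open \<Omega>" "x \<in> \<Omega>" "\<And>y. y \<in> \<Omega> \<Longrightarrow> F (y, t) = G (y, t)"
  shows "divergence F (x, t) = divergence G (x, t)"
proof -
  have "dx i (\<lambda>w. F w $ i) (x, t) = dx i (\<lambda>w. G w $ i) (x, t)" for i
  proof -
    obtain e where "e > 0" "\<And>s. \<bar>s\<bar> < e \<Longrightarrow> x + s *\<^sub>R axis i 1 \<in> \<Omega>"
      using open_contains_line[OF assms(1,2)] by metis
    then show ?thesis
      unfolding dx_def using assms(3) by (intro pdir_cong_line) auto
  qed
  then show ?thesis
    by (simp add: divergence_def)
qed

lemma divergence_add:
  assumes "smooth_on U a" "smooth_on U b" "z \<in> U"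
  shows "divergence (\<lambda>w. a w + b w) z = divergence a z + divergence b z"
proof -
  have "dx i (\<lambda>w. a w $ i + b w $ i) z = dx i (\<lambda>w. a w $ i) z + dx i (\<lambda>w. b w $ i) z" for i
    unfolding dx_def using assms
    by (intro pdir_add smooth_on_line_differentiable smooth_on_component axis_zero_in_Basis)
  then show ?thesis
    by (simp add: divergence_def sum.distrib)
qed

lemma divergence_scaleR:
  assumes "smooth_on U a" "z \<in> U"
  shows "divergence (\<lambda>w. c *\<^sub>R a w) z = c * divergence a z"
proof -
  have "dx i (\<lambda>w. c * a w $ i) z = c * dx i (\<lambda>w. a w $ i) z" for i
    unfolding dx_def using assms
    by (intro pdir_linear bounded_linear_mult_right smooth_on_component axis_zero_in_Basis)
  then show ?thesis
    by (simp add: divergence_def sum_distrib_left)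
qed

lemma dt_divergence:
  assumes u: "smooth_on U u" and z: "z \<in> U"
  shows "dt (divergence u) z = divergence (dt u) z"
proof -
  have U: "open U"
    using smooth_on_open[OF u] .
  have "dt (divergence u) z = (\<Sum>i\<in>UNIV. dt (dx i (\<lambda>w. u w $ i)) z)"
    unfolding divergence_components using u z by (intro dt_sum smooth_on_dx smooth_on_component)
  also have "\<dots> = (\<Sum>i\<in>UNIV. dx i (dt (\<lambda>w. u w $ i)) z)"
    using u z by (intro sum.cong refl dt_dx_commute smooth_on_component)
  also have "\<dots> = (\<Sum>i\<in>UNIV. dx i (\<lambda>w. dt u w $ i) z)"
    using u z U by (intro sum.cong refl dx_cong dt_component)
  finally show ?thesis
    by (simp add: divergence_def)
qed

lemma laplacian_divergence:
  assumes u: "smooth_on U u" and z: "z \<in> U"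
  shows "laplacian (divergence u) z = divergence (laplacian u) z"
proof -
  have U: "open U"
    using smooth_on_open[OF u] .
  define c where "c i = (\<lambda>w. u w $ i)" for i
  have c: "smooth_on U (c i)" for i
    unfolding c_def using u by (rule smooth_on_component)
  have "dx j (dx j (divergence u)) z = dx j (\<lambda>w. \<Sum>i\<in>UNIV. dx j (dx i (c i)) w) z" for j
    unfolding divergence_components c_def[symmetric] using U z c
    by (intro dx_cong dx_sum smooth_on_dx)
  also have "\<dots> j = (\<Sum>i\<in>UNIV. dx j (dx j (dx i (c i))) z)" for j
    using z c by (intro dx_sum smooth_on_dx)
  also have "\<dots> j = (\<Sum>i\<in>UNIV. dx i (dx j (dx j (c i))) z)" for j
  proof (intro sum.cong refl)
    fix i
    have "dx j (dx j (dx i (c i))) z = dx j (dx i (dx j (c i))) z"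
      using U z c by (intro dx_cong dx_commute)
    also have "\<dots> = dx i (dx j (dx j (c i))) z"
      using z c by (intro dx_commute smooth_on_dx)
    finally show "dx j (dx j (dx i (c i))) z = dx i (dx j (dx j (c i))) z" .
  qed
  finally have "laplacian (divergence u) z = (\<Sum>j\<in>UNIV. \<Sum>i\<in>UNIV. dx i (dx j (dx j (c i))) z)"
    by (simp add: laplacian_def)
  also have "\<dots> = (\<Sum>i\<in>UNIV. dx i (\<lambda>w. \<Sum>j\<in>UNIV. dx j (dx j (c i)) w) z)"
    using z c by (subst sum.swap) (intro sum.cong refl dx_sum[symmetric] smooth_on_dx)
  also have "\<dots> = (\<Sum>i\<in>UNIV. dx i (\<lambda>w. laplacian u w $ i) z)"
  proof (intro sum.cong refl dx_cong[OF U z])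
    fix i w assume "w \<in> U"
    from laplacian_component[OF u this, of i]
    show "(\<Sum>j\<in>UNIV. dx j (dx j (c i)) w) = laplacian u w $ i"
      by (simp add: c_def laplacian_def)
  qed
  finally show ?thesis
    by (simp add: divergence_def)
qed

lemma dt_divergence_eq_laplacian:
  assumes u: "smooth_on U u" and p: "smooth_on U p"
    and \<Omega>: "open \<Omega>" "\<Omega> \<times> {t} \<subseteq> U" and x: "x \<in> \<Omega>"
    and momentum: "\<And>y. y \<in> \<Omega> \<Longrightarrow>
      dt u (y, t) + convect u (y, t) = \<nu> *\<^sub>R laplacian u (y, t) - grad p (y, t) + f (y, t)"
    and pressure: "laplacian p (x, t) = divergence (\<lambda>z. f z - convect u z) (x, t)"
  shows "dt (divergence u) (x, t) = \<nu> * laplacian (divergence u) (x, t)"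
proof -
  have z: "(x, t) \<in> U"
    using \<Omega> x by auto
  have lap: "smooth_on U (\<lambda>w. (- \<nu>) *\<^sub>R laplacian u w)"
    using u by (intro smooth_on_linear[OF bounded_linear_scaleR_right] smooth_on_laplacian)
  have "laplacian p (x, t) = divergence (\<lambda>w. dt u w + ((- \<nu>) *\<^sub>R laplacian u w + grad p w)) (x, t)"
    unfolding pressure
  proof (rule divergence_cong[OF \<Omega>(1) x])
    fix y assume "y \<in> \<Omega>"
    from momentum[OF this]
    show "f (y, t) - convect u (y, t) = dt u (y, t) + ((- \<nu>) *\<^sub>R laplacian u (y, t) + grad p (y, t))"
      by (simp add: algebra_simps)
  qed
  also have "\<dots> = divergence (dt u) (x, t) +
      divergence (\<lambda>w. (- \<nu>) *\<^sub>R laplacian u w + grad p w) (x, t)"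
    using u p z lap by (intro divergence_add smooth_on_add smooth_on_dt smooth_on_grad)
  also have "\<dots> = divergence (dt u) (x, t) +
      (divergence (\<lambda>w. (- \<nu>) *\<^sub>R laplacian u w) (x, t) + divergence (grad p) (x, t))"
    using p z lap by (intro arg_cong2[where f = "(+)"] refl divergence_add smooth_on_grad)
  also have "\<dots> = divergence (dt u) (x, t) - \<nu> * divergence (laplacian u) (x, t) + laplacian p (x, t)"
    using divergence_scaleR[OF smooth_on_laplacian[OF u] z, of "- \<nu>"] by (simp add: divergence_grad)
  finally have "divergence (dt u) (x, t) = \<nu> * divergence (laplacian u) (x, t)"
    by simp
  then show ?thesis
    using u z by (simp add: dt_divergence laplacian_divergence)
qed

section \<open>The weak maximum principle for the heat equation\<close>

lemma deriv_nonneg_of_left_max: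
  fixes q :: "real \<Rightarrow> real"
  assumes q: "(q has_real_derivative D) (at 0)" and "d > 0"
    and max: "\<And>h. 0 < h \<Longrightarrow> h < d \<Longrightarrow> q (- h) \<le> q 0"
  shows "D \<ge> 0"
proof (rule ccontr)
  assume "\<not> D \<ge> 0"
  then obtain d' where "d' > 0" "\<And>h. 0 < h \<Longrightarrow> h < d' \<Longrightarrow> q 0 < q (0 - h)"
    using DERIV_neg_dec_left[OF q] by force
  moreover have "0 < min d d' / 2" "min d d' / 2 < d" "min d d' / 2 < d'"
    using \<open>d > 0\<close> \<open>d' > 0\<close> by auto
  ultimately show False
    using max[of "min d d' / 2"] by fastforce
qed

lemma second_deriv_nonpos_of_local_max:
  fixes g G :: "real \<Rightarrow> real"
  assumes "e > 0" and g: "\<And>s. \<bar>s\<bar> < e \<Longrightarrow> (g has_real_derivative G s) (at s)"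
    and G: "(G has_real_derivative D) (at 0)"
    and max: "\<And>s. \<bar>s\<bar> < e \<Longrightarrow> g s \<le> g 0"
  shows "D \<le> 0"
proof (rule ccontr)
  assume "\<not> D \<le> 0"
  have "G 0 = 0"
    using DERIV_local_max[OF g[of 0] \<open>e > 0\<close>] max \<open>e > 0\<close> by (simp add: abs_minus_commute)
  moreover obtain d where d: "d > 0" "\<And>h. 0 < h \<Longrightarrow> h < d \<Longrightarrow> G 0 < G (0 + h)"
    using DERIV_pos_inc_right[OF G] \<open>\<not> D \<le> 0\<close> by force
  define h where "h = min d e / 2"
  have h: "0 < h" "h < d" "h < e"
    using d \<open>e > 0\<close> by (auto simp: h_def)
  obtain \<xi> where "0 < \<xi>" "\<xi> < h" "g h - g 0 = (h - 0) * G \<xi>"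
    using MVT2[OF h(1), of g G] g h by force
  ultimately have "g h - g 0 > 0"
    using d(2)[of \<xi>] h by simp
  then show False
    using max[of h] h by simp
qed

lemma dt_ge_at_max_in_time:
  fixes \<psi> :: "(real^'n) \<times> real \<Rightarrow> real"
  assumes \<psi>: "smooth_on U \<psi>" "(x, t) \<in> U" and "t > 0"
    and max: "\<And>s. 0 \<le> s \<Longrightarrow> s \<le> t \<Longrightarrow> \<psi> (x, s) - c * s \<le> \<psi> (x, t) - c * t"
  shows "dt \<psi> (x, t) \<ge> c"
proof -
  have q: "((\<lambda>s. \<psi> (x, t + s) - c * s) has_real_derivative dt \<psi> (x, t) - c) (at 0)"
    using DERIV_diff[OF has_real_derivative_dt[OF \<psi>] DERIV_cmult_Id[of c]] by simp
  have "\<psi> (x, t + - h) - c * - h \<le> \<psi> (x, t + 0) - c * 0" if "0 < h" "h < t" for h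
    using max[of "t - h"] that by (simp add: algebra_simps)
  then have "dt \<psi> (x, t) - c \<ge> 0"
    by (rule deriv_nonneg_of_left_max[where q = "\<lambda>s. \<psi> (x, t + s) - c * s", OF q \<open>t > 0\<close>])
  then show ?thesis
    by simp
qed

lemma laplacian_nonpos_at_max_in_space:
  fixes \<psi> :: "(real^'n) \<times> real \<Rightarrow> real"
  assumes \<psi>: "smooth_on U \<psi>" and \<Omega>: "open \<Omega>" "\<Omega> \<times> {t} \<subseteq> U" and x: "x \<in> \<Omega>"
    and max: "\<And>y. y \<in> \<Omega> \<Longrightarrow> \<psi> (y, t) \<le> \<psi> (x, t)"
  shows "laplacian \<psi> (x, t) \<le> 0"
  unfolding laplacian_def
proof (rule sum_nonpos)
  fix i
  obtain e where e: "e > 0" "\<And>s. \<bar>s\<bar> < e \<Longrightarrow> x + s *\<^sub>R axis i 1 \<in> \<Omega>"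
    using open_contains_line[OF \<Omega>(1) x] by metis
  have "((\<lambda>s. dx i \<psi> (x + s *\<^sub>R axis i 1, t)) has_real_derivative dx i (dx i \<psi>) (x, t)) (at 0)"
    using has_real_derivative_dx[OF smooth_on_dx[OF \<psi>], of x 0 i t] \<Omega> x by auto
  then show "dx i (dx i \<psi>) (x, t) \<le> 0"
    using e \<Omega>(2) max
    by (intro second_deriv_nonpos_of_local_max[OF e(1),
          where g = "\<lambda>s. \<psi> (x + s *\<^sub>R axis i 1, t)" and G = "\<lambda>s. dx i \<psi> (x + s *\<^sub>R axis i 1, t)"]
          has_real_derivative_dx[OF \<psi>]) auto
qed

lemma heat_max_principle:
  fixes \<psi> :: "(real^'n) \<times> real \<Rightarrow> real"
  assumes \<Omega>: "open \<Omega>" "bounded \<Omega>" and "\<nu> > 0"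
    and \<psi>: "smooth_on U \<psi>" "closure \<Omega> \<times> {0..T} \<subseteq> U"
    and heat: "\<And>x t. x \<in> \<Omega> \<Longrightarrow> t \<in> {0<..T} \<Longrightarrow> dt \<psi> (x, t) = \<nu> * laplacian \<psi> (x, t)"
    and boundary: "\<And>x t. x \<in> frontier \<Omega> \<Longrightarrow> t \<in> {0..T} \<Longrightarrow> \<psi> (x, t) \<le> 0"
    and initial: "\<And>x. x \<in> \<Omega> \<Longrightarrow> \<psi> (x, 0) \<le> 0"
    and x: "x \<in> \<Omega>" and t: "t \<in> {0..T}"
  shows "\<psi> (x, t) \<le> 0"
proof (rule ccontr)
  assume "\<not> \<psi> (x, t) \<le> 0"
  \<comment> \<open>At a maximum of \<open>\<psi> - \<epsilon> t\<close> inside \<open>\<Omega> \<times> (0,T]\<close> we get \<open>dt \<psi> \<ge> \<epsilon> > 0 \<ge> \<nu> \<Delta>\<psi>\<close>.\<close>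
  define \<epsilon> where "\<epsilon> = \<psi> (x, t) / (2 * (T + 1))"
  have \<epsilon>: "\<epsilon> > 0"
    using \<open>\<not> \<psi> (x, t) \<le> 0\<close> t by (simp add: \<epsilon>_def)
  have "\<epsilon> * t \<le> \<epsilon> * (T + 1)"
    using \<epsilon> t by (intro mult_left_mono) auto
  also have "\<dots> = \<psi> (x, t) / 2"
    using t by (simp add: \<epsilon>_def field_simps)
  also have "\<dots> < \<psi> (x, t)"
    using \<open>\<not> \<psi> (x, t) \<le> 0\<close> by simp
  finally have "\<epsilon> * t < \<psi> (x, t)" .
  define K where "K = closure \<Omega> \<times> {0..T}"
  define v where "v w = \<psi> w - \<epsilon> * snd w" for w
  have "continuous_on K v"
    using continuous_on_subset[OF smooth_on_continuous_on[OF \<psi>(1), of "[]"] \<psi>(2)]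
    unfolding v_def K_def by (intro continuous_intros) auto
  moreover have "compact K" "(x, t) \<in> K"
    using \<Omega>(2) x t closure_subset by (auto simp: K_def compact_closure intro!: compact_Times)
  ultimately obtain x0 t0 where max: "(x0, t0) \<in> K" "\<And>w. w \<in> K \<Longrightarrow> v w \<le> v (x0, t0)"
    using continuous_attains_sup[of K v] by fastforce
  have t0: "t0 \<in> {0..T}" and "x0 \<in> closure \<Omega>"
    using max(1) by (auto simp: K_def)
  have pos: "v (x0, t0) > 0"
    using max(2)[OF \<open>(x, t) \<in> K\<close>] \<open>\<epsilon> * t < \<psi> (x, t)\<close> by (simp add: v_def)
  have x0: "x0 \<in> \<Omega>"
  proof (rule ccontr)
    assume "x0 \<notin> \<Omega>"
    then have "x0 \<in> frontier \<Omega>"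
      using \<open>x0 \<in> closure \<Omega>\<close> \<Omega>(1) by (simp add: frontier_def interior_open)
    then show False
      using boundary[OF _ t0] pos t0 \<epsilon> by (simp add: v_def) (smt (verit) mult_nonneg_nonneg)
  qed
  have "t0 > 0"
    using initial[OF x0] pos t0 by (cases "t0 = 0") (auto simp: v_def)
  have cl: "\<And>y. y \<in> \<Omega> \<Longrightarrow> y \<in> closure \<Omega>"
    using closure_subset by blast
  have "dt \<psi> (x0, t0) \<ge> \<epsilon>"
    using \<psi> x0 t0 \<open>t0 > 0\<close> cl max(2)[of "(x0, _)"]
    by (intro dt_ge_at_max_in_time[OF \<psi>(1)]) (auto simp: K_def v_def)
  moreover have "laplacian \<psi> (x0, t0) \<le> 0"
    using \<psi> x0 t0 cl max(2)[of "(_, t0)"]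
    by (intro laplacian_nonpos_at_max_in_space[OF \<psi>(1) \<Omega>(1)]) (auto simp: K_def v_def)
  ultimately show False
    using heat[OF x0] t0 \<open>t0 > 0\<close> \<open>\<nu> > 0\<close> \<epsilon> by (simp add: mult_nonneg_nonpos) (smt (verit) mult_nonneg_nonpos)
qed

lemma heat_solution_eq_zero:
  fixes \<psi> :: "(real^'n) \<times> real \<Rightarrow> real"
  assumes \<Omega>: "open \<Omega>" "bounded \<Omega>" and \<nu>: "\<nu> > 0"
    and \<psi>: "smooth_on U \<psi>" "closure \<Omega> \<times> {0..T} \<subseteq> U"
    and heat: "\<And>x t. x \<in> \<Omega> \<Longrightarrow> t \<in> {0<..T} \<Longrightarrow> dt \<psi> (x, t) = \<nu> * laplacian \<psi> (x, t)"
    and boundary: "\<And>x t. x \<in> frontier \<Omega> \<Longrightarrow> t \<in> {0..T} \<Longrightarrow> \<psi> (x, t) = 0"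
    and initial: "\<And>x. x \<in> \<Omega> \<Longrightarrow> \<psi> (x, 0) = 0"
    and x: "x \<in> \<Omega>" and t: "t \<in> {0..T}"
  shows "\<psi> (x, t) = 0"
proof -
  have minus: "bounded_linear (\<lambda>r::real. - r)"
    by (rule bounded_linear_minus[OF bounded_linear_ident])
  have dt_minus: "dt (\<lambda>w. - \<psi> w) z = - dt \<psi> z" if "z \<in> U" for z
    using iterD_linear[OF minus \<psi>(1), of "[(0, 1)]" z] that by (simp add: dt_def zero_one_in_Basis)
  have laplacian_minus: "laplacian (\<lambda>w. - \<psi> w) z = - laplacian \<psi> z" if "z \<in> U" for z
    using iterD_linear[OF minus \<psi>(1), of "[(axis i 1, 0), (axis i 1, 0)]" z for i] that
    by (simp add: laplacian_def dx_pdir axis_zero_in_Basis sum_negf)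
  have "- \<psi> (x, t) \<le> 0"
  proof (rule heat_max_principle[OF \<Omega> \<nu> smooth_on_linear[OF minus \<psi>(1)] \<psi>(2) _ _ _ x t])
    fix y s assume "y \<in> \<Omega>" "s \<in> {0<..T}"
    moreover from this have "(y, s) \<in> U"
      using \<psi>(2) closure_subset by fastforce
    ultimately show "dt (\<lambda>w. - \<psi> w) (y, s) = \<nu> * laplacian (\<lambda>w. - \<psi> w) (y, s)"
      by (simp add: dt_minus laplacian_minus heat)
  qed (simp_all add: boundary initial)
  moreover have "\<psi> (x, t) \<le> 0"
    by (rule heat_max_principle[OF \<Omega> \<nu> \<psi> heat _ _ x t]) (simp_all add: boundary initial)
  ultimately show ?thesis
    by simp
qed

lemma PPE_setting_divergence_conclusion:
  assumes "PPE_setting CC CR \<Omega> \<nu> lam T f g n u p"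
  shows "divergence_conclusion \<Omega> \<nu> T u"
proof -
  have \<Omega>: "open \<Omega>" "bounded \<Omega>" and \<nu>: "\<nu> > 0"
    and PPE: "PPE_solution CC CR \<Omega> \<nu> lam T f g n u p"
    using assms by (auto simp: PPE_setting_def bounded_domain_def)
  obtain Uu Up where Uu: "closure \<Omega> \<times> {0..T} \<subseteq> Uu" "smooth_on Uu u"
    and Up: "closure \<Omega> \<times> {0..T} \<subseteq> Up" "smooth_on Up p"
    using assms unfolding PPE_setting_def smooth_up_to_boundary_def by blast
  define U where "U = Uu \<inter> Up"
  have "open U"
    using Uu Up by (simp add: U_def open_Int smooth_on_open)
  then have U: "closure \<Omega> \<times> {0..T} \<subseteq> U" "smooth_on U u" "smooth_on U p"
    using Uu Up smooth_on_subset[of Uu u U] smooth_on_subset[of Up p U] by (auto simp: U_def)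
  have slice: "\<Omega> \<times> {t} \<subseteq> U" if "t \<in> {0..T}" for t
    using U(1) closure_subset that by fastforce
  have heat: "dt (divergence u) (x, t) = \<nu> * laplacian (divergence u) (x, t)"
    if "x \<in> \<Omega>" "t \<in> {0<..T}" for x t
    using PPE that slice[of t] unfolding PPE_solution_def
    by (intro dt_divergence_eq_laplacian[OF U(2,3) \<Omega>(1)]) auto
  have boundary: "divergence u (x, t) = 0" if "x \<in> frontier \<Omega>" "t \<in> {0..T}" for x t
    using PPE that unfolding PPE_solution_def by blast
  show ?thesis
    unfolding divergence_conclusion_def
    using heat boundary heat_solution_eq_zero[OF \<Omega> \<nu> smooth_on_divergence[OF U(2)] U(1) heat boundary]
    by blast
qed

theorem mainTheorem1:
  shows "(\<forall>(\<Omega> :: (real^2) set) \<nu> lam T f g n u p.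
            PPE_setting curlcurl2 cross2 \<Omega> \<nu> lam T f g n u p \<longrightarrow>
            divergence_conclusion \<Omega> \<nu> T u) \<and>
         (\<forall>(\<Omega> :: (real^3) set) \<nu> lam T f g n u p.
            PPE_setting curlcurl3 cross3 \<Omega> \<nu> lam T f g n u p \<longrightarrow>
            divergence_conclusion \<Omega> \<nu> T u)"
  by (blast intro: PPE_setting_divergence_conclusion)

end
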